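(* Let $p,q\ge1$, $N\ge1$, and let $\mu$ be a $q\times p$ matrix of measures. Assume that $\mathscr M_N$, $\mathscr M_{N,(b,0)}$ ($b\in\{1,\dots,q\}$) and $\mathscr M_{N,(0,a)}$ ($a\in\{1,\dots,p\}$) admit Gauss--Borel factorizations $\mathscr M_{N,(n,m)}=\mathscr L_{N,(n,m)}^{-1}\mathscr U_{N,(n,m)}^{-1}$ with lower unitriangular $\mathscr L_{N,(n,m)}$, and let $U_b:=\mathscr U_{N,(b,0)}^{-1}\mathscr U_{N,(b-1,0)}$, $L_a:=\mathscr L_{N,(0,a-1)}\mathscr L_{N,(0,a)}^{-1}$ (so that $\mathscr T_N=L_1\cdots L_pU_q\cdots U_1$). Write $U_{b,n}:=(U_b)_{n,n}$ and $L_{a,n}:=(L_a)_{n,n-1}$. Then \[U_{b,n}=-\frac{\tau^B_{b-1,n}\,\tau^B_{b,n+1}}{\tau^B_{b-1,n+1}\,\tau^B_{b,n}},\qquad b\in\{1,\dots,q\},\ n\in\{0,1,\dots,N-b-1\},\] \[L_{a,n+1}=-\frac{\tau^A_{a-1,n+2}\,\tau^A_{a,n}}{\tau^A_{a-1,n+1}\,\tau^A_{a,n+1}},\qquad a\in\{1,\dots,p\},\ n\in\{0,1,\dots,N-a-1\}.\]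
   Context: All matrices are indexed from $0$. Fix integers $p,q\ge1$ and a $q\times p$ matrix $\mu$ of real measures on $\mathbb R$ with finite moments. For $r,n\ge1$, $X^{[n]}_{[r]}(x)$ is the $n\times r$ matrix whose row $k$ is $x^{\lfloor k/r\rfloor}e_{k\bmod r}^\top$ ($e_0,\dots,e_{r-1}$ standard basis of $\mathbb R^r$). Moment matrices: $\mathscr M^{[n,m]}=\int X^{[n]}_{[q]}\,\mathrm d\mu\,(X^{[m]}_{[p]})^\top$, $\mathscr M_n=\mathscr M^{[n,n]}$. Gauss--Borel factorization: $\mathscr M_N=\mathscr L_N^{-1}\mathscr U_N^{-1}$, $\mathscr L_N$ lower unitriangular, $\mathscr U_N$ nonsingular upper triangular. The polynomial matrices are $B^{[N]}(x):=\mathscr L_NX^{[N]}_{[q]}(x)$ ($N\times q$, entry in row $n$ and column $j$ denoted $B^{(j)}_n(x)$, $j=1,\dots,q$) and $A^{[N]}(x):=(X^{[N]}_{[p]}(x))^\top\mathscr U_N$ ($p\times N$, entry in row $i$ and column $n$ denoted $A^{(i)}_n(x)$, $i=1,\dots,p$). $\Lambda^{[n,n+r]}_{[r]}$ is the $n\times(n+r)$ matrix with entries $\delta_{j,i+r}$, and $\mathscr T_N:=\mathscr L_N\Lambda^{[N,N+q]}_{[q]}\mathscr M^{[N+q,N]}\mathscr U_N$. $\mathfrak X_{[r,1]}(x)$ is the $r\times r$ matrix with $(\mathfrak X_{[r,1]})_{i,i+1}=1$ ($0\le i\le r-2$), $(\mathfrak X_{[r,1]})_{r-1,0}=x$, other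 entries $0$; $\mathrm d\mu_{(n,m)}:=\mathfrak X_{[q,1]}^n\,\mathrm d\mu\,(\mathfrak X_{[p,1]}^m)^\top$ with moment matrices $\mathscr M_{N,(n,m)}$ defined as for $\mu$. The $\tau$-determinants are \[\tau^B_{b,n}:=\det\big(B^{(j)}_{n+i}(0)\big)_{0\le i\le b-1,\ 1\le j\le b},\qquad \tau^A_{a,n}:=\det\big(A^{(i)}_{n+a-k}(0)\big)_{1\le i\le a,\ 1\le k\le a},\] (so the row $i$ of the matrix defining $\tau^A_{a,n}$ is $(A^{(i)}_{n+a-1}(0),\dots,A^{(i)}_n(0))$), and $\tau^A_{0,n}=\tau^B_{0,n}=1$. *)

theory Defs
  imports "HOL-Analysis.Analysis" "Jordan_Normal_Form.Determinant"
begin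

text \<open>Matrices are Jordan_Normal_Form matrices, indexed from 0.
  A real (signed) measure on the real line is represented by its Jordan decomposition,
  a pair (positive part, negative part) of measures on the Borel sets of the reals.\<close>

type_synonym smeasure = "real measure \<times> real measure"

definition sint :: "smeasure \<Rightarrow> (real \<Rightarrow> real) \<Rightarrow> real" where
  "sint m f = integral\<^sup>L (fst m) f - integral\<^sup>L (snd m) f"

definition real_measure_fm :: "smeasure \<Rightarrow> bool" where
  "real_measure_fm m \<longleftrightarrow>
     sets (fst m) = sets borel \<and> sets (snd m) = sets borel \<and>
     (\<forall>k::nat. integrable (fst m) (\<lambda>x. x ^ k) \<and> integrable (snd m) (\<lambda>x. x ^ k))"

definition minv :: "real mat \<Rightarrow> real mat" where
  "minv A = (THE B. B \<in> carrier_mat (dim_row A) (dim_row A) \<and>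
               A * B = 1\<^sub>m (dim_row A) \<and> B * A = 1\<^sub>m (dim_row A))"

definition Xmat :: "nat \<Rightarrow> nat \<Rightarrow> real \<Rightarrow> real mat" where
  "Xmat r n x = mat n r (\<lambda>(k, j). if j = k mod r then x ^ (k div r) else 0)"

definition frakX :: "nat \<Rightarrow> real \<Rightarrow> real mat" where
  "frakX r x = mat r r (\<lambda>(i, j). if j = i + 1 then 1 else if i = r - 1 \<and> j = 0 then x else 0)"

text \<open>Moment matrix  M^{[nr,nc]} of  d\<mu>_{(n,m)} = \<frak>X_q^n d\<mu> (\<frak>X_p^m)^T,
  where \<mu> is a q x p matrix of real measures (entries \<mu> i j, i<q, j<p), i.e.
  entry (k,l) is  sum_{i,j,i',j'} int X_q(x)_{k,i} (\<frak>X_q(x)^n)_{i,i'} (\<frak>X_p(x)^m)_{j,j'} X_p(x)_{l,j} d\<mu>_{i',j'}.\<close>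
definition moment_mat ::
  "nat \<Rightarrow> nat \<Rightarrow> (nat \<Rightarrow> nat \<Rightarrow> smeasure) \<Rightarrow> nat \<Rightarrow> nat \<Rightarrow> nat \<Rightarrow> nat \<Rightarrow> real mat" where
  "moment_mat q p \<mu> n m nr nc = mat nr nc (\<lambda>(k, l).
     (\<Sum>i<q. \<Sum>j<p. \<Sum>i'<q. \<Sum>j'<p.
        sint (\<mu> i' j') (\<lambda>x. Xmat q nr x $$ (k, i) * (frakX q x ^\<^sub>m n) $$ (i, i')
                           * (frakX p x ^\<^sub>m m) $$ (j, j') * Xmat p nc x $$ (l, j))))"

definition gauss_borel :: "nat \<Rightarrow> real mat \<Rightarrow> real mat \<Rightarrow> real mat \<Rightarrow> bool" where
  "gauss_borel N M L U \<longleftrightarrow>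
     L \<in> carrier_mat N N \<and> U \<in> carrier_mat N N \<and>
     (\<forall>i<N. \<forall>j<N. i < j \<longrightarrow> L $$ (i, j) = 0) \<and> (\<forall>i<N. L $$ (i, i) = 1) \<and>
     (\<forall>i<N. \<forall>j<N. j < i \<longrightarrow> U $$ (i, j) = 0) \<and> invertible_mat U \<and>
     M = minv L * minv U"

definition Bpoly :: "nat \<Rightarrow> nat \<Rightarrow> real mat \<Rightarrow> real \<Rightarrow> real mat" where
  "Bpoly q N L x = L * Xmat q N x"

definition Apoly :: "nat \<Rightarrow> nat \<Rightarrow> real mat \<Rightarrow> real \<Rightarrow> real mat" where
  "Apoly p N U x = transpose_mat (Xmat p N x) * U"

text \<open>B^{(j)}_n is the entry in row n and column j-1 (labels j = 1..q);
  A^{(i)}_n is the entry in row i-1 and column n (labels i = 1..p).\<close>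
definition tauB :: "nat \<Rightarrow> nat \<Rightarrow> real mat \<Rightarrow> nat \<Rightarrow> nat \<Rightarrow> real" where
  "tauB q N L b n = (if b = 0 then 1 else
     det (mat b b (\<lambda>(i, j). Bpoly q N L 0 $$ (n + i, j))))"

definition tauA :: "nat \<Rightarrow> nat \<Rightarrow> real mat \<Rightarrow> nat \<Rightarrow> nat \<Rightarrow> real" where
  "tauA p N U a n = (if a = 0 then 1 else
     det (mat a a (\<lambda>(i, k). Apoly p N U 0 $$ (i, n + a - (k + 1)))))"

end

theory Submission
  imports Defs
begin

text \<open>
  The moment matrix of \<open>d\<mu>\<close>_(n,m) has entries g (k + n) (l + m) for the moments g of \<open>\<mu>\<close>,
  so all matrices in the statement are row and column shifts of one array.

  For a Gauss--Borel factorization M = L^-1 U^-1 the product L M = U^-1 is upper triangular, so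
  the leading principal minors of M are partial products of the diagonal of U^-1. A block
  determinant computation turns \<open>\<tau>\<close>^B_(b,n), a minor of the first b columns of L, into a signed
  quotient of the leading n-minors of the row shift M_(b,0) and of M, and dually \<open>\<tau>\<close>^A_(a,n) into
  a quotient of minors of column shifts. On the other side, the diagonal of U_b is a quotient of
  diagonal entries of inverse upper factors, and the subdiagonal of L_a is read off the triangular
  system (L_(0,a-1) L_(0,a)^-1) U_(0,a)^-1 = L_(0,a-1) M_(0,a), whose right-hand side is a column
  shift of U_(0,a-1)^-1. Both sides of each identity thereby become the same cross ratio of
  leading minors.
\<close>

section \<open>Inverses and triangular matrices\<close>

lemma minv_eqI:
  assumes A: "A \<in> carrier_mat n n" and B: "B \<in> carrier_mat n n"
    and AB: "A * B = 1\<^sub>m n" and BA: "B * A = 1\<^sub>m n"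
  shows "minv A = B"
  unfolding minv_def
proof (rule the_equality)
  show "B \<in> carrier_mat (dim_row A) (dim_row A) \<and> A * B = 1\<^sub>m (dim_row A) \<and> B * A = 1\<^sub>m (dim_row A)"
    using A B AB BA by auto
next
  fix C
  assume "C \<in> carrier_mat (dim_row A) (dim_row A) \<and> A * C = 1\<^sub>m (dim_row A) \<and> C * A = 1\<^sub>m (dim_row A)"
  hence C: "C \<in> carrier_mat n n" and CA: "C * A = 1\<^sub>m n" using A by auto
  have "C = C * (A * B)" using C AB by simp
  also have "\<dots> = (C * A) * B" using C A B by (simp add: assoc_mult_mat)
  also have "\<dots> = B" using CA B by simp
  finally show "C = B" .
qed

lemma minv_invertible_mat:
  assumes A: "A \<in> carrier_mat n n" and inv: "invertible_mat A"
  shows "minv A \<in> carrier_mat n n" and "A * minv A = 1\<^sub>m n" and "minv A * A = 1\<^sub>m n"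
proof -
  from inv obtain B where AB: "A * B = 1\<^sub>m n" and BA: "B * A = 1\<^sub>m (dim_row B)"
    unfolding invertible_mat_def inverts_mat_def using A by auto
  have "dim_col B = n" using AB by (metis index_mult_mat(3) index_one_mat(3))
  moreover have "dim_row B = n" using BA A by (metis index_mult_mat(3) index_one_mat(3) carrier_matD(2))
  ultimately have B: "B \<in> carrier_mat n n" by auto
  show "minv A \<in> carrier_mat n n" "A * minv A = 1\<^sub>m n" "minv A * A = 1\<^sub>m n"
    using minv_eqI[OF A B AB] BA B AB by simp_all
qed

lemma invertible_mat_if_det_nonzero:
  assumes A: "A \<in> carrier_mat n n" and "det A \<noteq> 0"
  shows "invertible_mat (A :: real mat)"
proof -
  have "A \<in> Units (ring_mat TYPE(real) n undefined)"
    by (rule det_non_zero_imp_unit) (use assms in auto)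
  then obtain B where "B \<in> carrier_mat n n" "B * A = 1\<^sub>m n" "A * B = 1\<^sub>m n"
    unfolding Units_def by (auto simp: ring_mat_simps)
  thus ?thesis
    using A unfolding invertible_mat_def inverts_mat_def square_mat.simps by auto
qed

lemma det_upper_triangular_prod:
  assumes A: "A \<in> carrier_mat k k" and up: "\<And>i j. i < k \<Longrightarrow> j < i \<Longrightarrow> A $$ (i, j) = 0"
  shows "det A = (\<Prod>i<k. A $$ (i, i))"
proof -
  have "det A = prod_list (diag_mat A)"
    by (rule det_upper_triangular[OF _ A]) (use A up in \<open>auto simp: upper_triangular_def\<close>)
  also have "\<dots> = (\<Prod>i<k. A $$ (i, i))"
    using A by (simp add: diag_mat_def prod.distinct_set_conv_list[symmetric] atLeast0LessThan)
  finally show ?thesis .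
qed

lemma det_lower_triangular_prod:
  assumes A: "A \<in> carrier_mat k k" and lo: "\<And>i j. i < j \<Longrightarrow> j < k \<Longrightarrow> A $$ (i, j) = 0"
  shows "det A = (\<Prod>i<k. A $$ (i, i))"
proof -
  have "det A = prod_list (diag_mat A)"
    by (rule det_lower_triangular[OF _ A]) (use lo in auto)
  also have "\<dots> = (\<Prod>i<k. A $$ (i, i))"
    using A by (simp add: diag_mat_def prod.distinct_set_conv_list[symmetric] atLeast0LessThan)
  finally show ?thesis .
qed

lemma upper_triangular_row_solve:
  fixes A :: "real mat" and y :: "nat \<Rightarrow> real"
  assumes up: "\<And>i j. i < N \<Longrightarrow> j < N \<Longrightarrow> j < i \<Longrightarrow> A $$ (i, j) = 0"
    and diag: "\<And>i. i < N \<Longrightarrow> A $$ (i, i) \<noteq> 0"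
    and m: "m < N"
    and eq: "\<And>c. c \<le> m \<Longrightarrow> (\<Sum>t<N. y t * A $$ (t, c)) = (if c = m then r else 0)"
  shows "\<forall>t<m. y t = 0" and "y m * A $$ (m, m) = r"
proof -
  have sum_eq: "(\<Sum>t<N. y t * A $$ (t, c)) = y c * A $$ (c, c)"
    if c: "c < N" and zero: "\<forall>t<c. y t = 0" for c
  proof -
    have "(\<Sum>t<N. y t * A $$ (t, c)) = (\<Sum>t\<in>{c}. y t * A $$ (t, c))"
      by (rule sum.mono_neutral_right) (use c zero up in \<open>auto simp: nat_neq_iff\<close>)
    thus ?thesis by simp
  qed
  have zero: "\<forall>t<c. y t = 0" if "c \<le> m" for c
    using that
  proof (induction c)
    case 0
    thus ?case by simp
  next
    case (Suc c)
    have "y c * A $$ (c, c) = 0" using eq[of c] sum_eq[of c] Suc m by auto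
    hence "y c = 0" using diag[of c] Suc m by auto
    thus ?case using Suc by (auto simp: less_Suc_eq)
  qed
  show "\<forall>t<m. y t = 0" using zero[of m] by simp
  show "y m * A $$ (m, m) = r" using zero[of m] eq[of m] sum_eq[of m] m by auto
qed

lemma upper_triangular_left_inverse:
  fixes A B :: "real mat"
  assumes A: "A \<in> carrier_mat N N" and B: "B \<in> carrier_mat N N" and BA: "B * A = 1\<^sub>m N"
    and up: "\<And>i j. i < N \<Longrightarrow> j < N \<Longrightarrow> j < i \<Longrightarrow> A $$ (i, j) = 0"
    and diag: "\<And>i. i < N \<Longrightarrow> A $$ (i, i) \<noteq> 0"
  shows "\<And>i j. i < N \<Longrightarrow> j < N \<Longrightarrow> j < i \<Longrightarrow> B $$ (i, j) = 0"
    and "\<And>i. i < N \<Longrightarrow> B $$ (i, i) * A $$ (i, i) = 1"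
proof -
  have row_eq: "(\<Sum>t<N. B $$ (i, t) * A $$ (t, c)) = (if c = i then 1 else 0)"
    if "i < N" "c \<le> i" for i c
  proof -
    have "(B * A) $$ (i, c) = (\<Sum>t<N. B $$ (i, t) * A $$ (t, c))"
      using A B that by (simp add: scalar_prod_def lessThan_atLeast0)
    thus ?thesis using BA that by auto
  qed
  show "B $$ (i, j) = 0" if "i < N" "j < N" "j < i" for i j
    using upper_triangular_row_solve(1)[OF up diag _ row_eq] that by auto
  show "B $$ (i, i) * A $$ (i, i) = 1" if "i < N" for i
    using upper_triangular_row_solve(2)[OF up diag _ row_eq] that by auto
qed

lemma upper_triangular_mult_diag:
  fixes A B :: "real mat"
  assumes A: "A \<in> carrier_mat N N" and B: "B \<in> carrier_mat N N" and n: "n < N"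
    and upA: "\<And>i j. i < N \<Longrightarrow> j < N \<Longrightarrow> j < i \<Longrightarrow> A $$ (i, j) = 0"
    and upB: "\<And>i j. i < N \<Longrightarrow> j < N \<Longrightarrow> j < i \<Longrightarrow> B $$ (i, j) = 0"
  shows "(A * B) $$ (n, n) = A $$ (n, n) * B $$ (n, n)"
proof -
  have "(A * B) $$ (n, n) = (\<Sum>t<N. A $$ (n, t) * B $$ (t, n))"
    using A B n by (simp add: scalar_prod_def lessThan_atLeast0)
  also have "\<dots> = (\<Sum>t\<in>{n}. A $$ (n, t) * B $$ (t, n))"
    by (rule sum.mono_neutral_right) (use n upA upB in \<open>auto simp: nat_neq_iff\<close>)
  finally show ?thesis by simp
qed

section \<open>Block determinants and leading submatrices\<close>

lemma det_append_unit_cols: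
  fixes f :: "nat \<Rightarrow> nat \<Rightarrow> real"
  shows "det (mat (n + b) (n + b) (\<lambda>(r, c). if c < n then f r c else if r = c - n then 1 else 0))
         = (-1) ^ (n * b) * det (mat n n (\<lambda>(r, c). f (r + b) c))"
proof (induction b arbitrary: f)
  case 0
  have "mat (n + 0) (n + 0) (\<lambda>(r, c). if c < n then f r c else if r = c - n then 1 else 0)
        = mat n n (\<lambda>(r, c). f (r + 0) c)"
    by (rule eq_matI) auto
  thus ?case by simp
next
  case (Suc b)
  define Z where "Z = mat (n + Suc b) (n + Suc b)
    (\<lambda>(r, c). if c < n then f r c else if r = c - n then 1 else (0::real))"
  have Z: "Z \<in> carrier_mat (n + Suc b) (n + Suc b)" unfolding Z_def by simp
  \<comment> \<open>column n of Z is the first unit vector: expand along it\<close>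
  have "det Z = (\<Sum>i<n + Suc b. Z $$ (i, n) * cofactor Z i n)"
    by (rule laplace_expansion_column[OF Z]) simp
  also have "\<dots> = (\<Sum>i<n + Suc b. if i = 0 then cofactor Z 0 n else 0)"
    by (rule sum.cong) (auto simp: Z_def)
  also have "\<dots> = cofactor Z 0 n" by simp
  also have "\<dots> = (-1) ^ n * det (mat_delete Z 0 n)" unfolding cofactor_def by simp
  also have "mat_delete Z 0 n = mat (n + b) (n + b)
      (\<lambda>(r, c). if c < n then f (Suc r) c else if r = c - n then 1 else 0)"
    unfolding mat_delete_def Z_def by (rule eq_matI) auto
  also have "det \<dots> = (-1) ^ (n * b) * det (mat n n (\<lambda>(r, c). f (Suc (r + b)) c))"
    using Suc.IH[of "\<lambda>r c. f (Suc r) c"] by simp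
  finally show ?case unfolding Z_def by (simp add: power_add)
qed

lemma det_append_unit_rows:
  fixes f :: "nat \<Rightarrow> nat \<Rightarrow> real"
  shows "det (mat (n + b) (n + b) (\<lambda>(r, c). if r < n then f r c else if c = r - n then 1 else 0))
         = (-1) ^ (n * b) * det (mat n n (\<lambda>(r, c). f r (c + b)))"
proof -
  have "mat (n + b) (n + b) (\<lambda>(r, c). if r < n then f r c else if c = r - n then 1 else 0)
      = transpose_mat (mat (n + b) (n + b)
          (\<lambda>(r, c). if c < n then f c r else if r = c - n then 1 else 0))"
    by (rule eq_matI) auto
  hence "det (mat (n + b) (n + b) (\<lambda>(r, c). if r < n then f r c else if c = r - n then 1 else 0))
      = det (mat (n + b) (n + b) (\<lambda>(r, c). if c < n then f c r else if r = c - n then 1 else 0))"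
    by (simp add: det_transpose[OF mat_carrier])
  also have "\<dots> = (-1) ^ (n * b) * det (mat n n (\<lambda>(r, c). f c (r + b)))"
    using det_append_unit_cols[of n b "\<lambda>r c. f c r"] by simp
  also have "mat n n (\<lambda>(r, c). f c (r + b)) = transpose_mat (mat n n (\<lambda>(r, c). f r (c + b)))"
    by (rule eq_matI) auto
  finally show ?thesis by (simp add: det_transpose[OF mat_carrier])
qed

lemma det_block_upper_triangular:
  fixes G :: "real mat"
  assumes G: "G \<in> carrier_mat (n + b) (n + b)"
    and zero: "\<And>r c. n \<le> r \<Longrightarrow> r < n + b \<Longrightarrow> c < n \<Longrightarrow> G $$ (r, c) = 0"
  shows "det G = det (mat n n (\<lambda>(r, c). G $$ (r, c))) * det (mat b b (\<lambda>(r, c). G $$ (r + n, c + n)))"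
proof -
  have "G = four_block_mat (mat n n (\<lambda>(r, c). G $$ (r, c))) (mat n b (\<lambda>(r, c). G $$ (r, c + n)))
            (0\<^sub>m b n) (mat b b (\<lambda>(r, c). G $$ (r + n, c + n)))"
    by (rule eq_matI) (use G zero in auto)
  also have "det \<dots> = det (mat n n (\<lambda>(r, c). G $$ (r, c))) * det (mat b b (\<lambda>(r, c). G $$ (r + n, c + n)))"
    by (rule det_four_block_mat_lower_left_zero) auto
  finally show ?thesis .
qed

lemma det_block_lower_triangular:
  fixes G :: "real mat"
  assumes G: "G \<in> carrier_mat (n + b) (n + b)"
    and zero: "\<And>r c. r < n \<Longrightarrow> n \<le> c \<Longrightarrow> c < n + b \<Longrightarrow> G $$ (r, c) = 0"
  shows "det G = det (mat n n (\<lambda>(r, c). G $$ (r, c))) * det (mat b b (\<lambda>(r, c). G $$ (r + n, c + n)))"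
proof -
  have "G = four_block_mat (mat n n (\<lambda>(r, c). G $$ (r, c))) (0\<^sub>m n b)
            (mat b n (\<lambda>(r, c). G $$ (r + n, c))) (mat b b (\<lambda>(r, c). G $$ (r + n, c + n)))"
    by (rule eq_matI) (use G zero in auto)
  also have "det \<dots> = det (mat n n (\<lambda>(r, c). G $$ (r, c))) * det (mat b b (\<lambda>(r, c). G $$ (r + n, c + n)))"
    by (rule det_four_block_mat_upper_right_zero) auto
  finally show ?thesis .
qed

definition lead_submat :: "nat \<Rightarrow> real mat \<Rightarrow> real mat" where
  "lead_submat k A = mat k k (\<lambda>(i, j). A $$ (i, j))"

lemma lead_submat_carrier [simp]: "lead_submat k A \<in> carrier_mat k k"
  unfolding lead_submat_def by simp

lemma lead_submat_dim [simp]: "dim_row (lead_submat k A) = k" "dim_col (lead_submat k A) = k"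
  unfolding lead_submat_def by simp_all

lemma lead_submat_index [simp]: "i < k \<Longrightarrow> j < k \<Longrightarrow> lead_submat k A $$ (i, j) = A $$ (i, j)"
  unfolding lead_submat_def by simp

lemma lead_submat_mult:
  assumes A: "A \<in> carrier_mat N N" and B: "B \<in> carrier_mat N N" and k: "k \<le> N"
    and zero: "\<And>i j t. i < k \<Longrightarrow> j < k \<Longrightarrow> k \<le> t \<Longrightarrow> t < N \<Longrightarrow> A $$ (i, t) * B $$ (t, j) = 0"
  shows "lead_submat k (A * B) = lead_submat k A * lead_submat k B"
proof (rule eq_matI)
  fix i j assume "i < dim_row (lead_submat k A * lead_submat k B)"
    and "j < dim_col (lead_submat k A * lead_submat k B)"
  hence i: "i < k" and j: "j < k" by auto
  have "lead_submat k (A * B) $$ (i, j) = (\<Sum>t<N. A $$ (i, t) * B $$ (t, j))"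
    using A B i j k by (simp add: scalar_prod_def lessThan_atLeast0)
  also have "\<dots> = (\<Sum>t<k. A $$ (i, t) * B $$ (t, j))"
    by (rule sum.mono_neutral_right) (use k zero i j in auto)
  also have "\<dots> = (lead_submat k A * lead_submat k B) $$ (i, j)"
    using i j by (simp add: scalar_prod_def lessThan_atLeast0)
  finally show "lead_submat k (A * B) $$ (i, j) = (lead_submat k A * lead_submat k B) $$ (i, j)" .
qed auto

section \<open>Gauss--Borel factorizations\<close>

locale gauss_borel_factorization =
  fixes N :: nat and M L U :: "real mat"
  assumes factorization: "gauss_borel N M L U"
begin

lemma L_carrier: "L \<in> carrier_mat N N"
  and U_carrier: "U \<in> carrier_mat N N"
  and L_upper_zero: "\<And>i j. i < N \<Longrightarrow> j < N \<Longrightarrow> i < j \<Longrightarrow> L $$ (i, j) = 0"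
  and L_diag: "\<And>i. i < N \<Longrightarrow> L $$ (i, i) = 1"
  and U_lower_zero: "\<And>i j. i < N \<Longrightarrow> j < N \<Longrightarrow> j < i \<Longrightarrow> U $$ (i, j) = 0"
  and U_invertible: "invertible_mat U"
  and M_eq: "M = minv L * minv U"
  using factorization unfolding gauss_borel_def by auto

lemma minv_L_carrier: "minv L \<in> carrier_mat N N"
  and L_minv_L: "L * minv L = 1\<^sub>m N"
proof -
  have "det L = 1"
    using det_lower_triangular_prod[OF L_carrier] L_upper_zero L_diag by simp
  hence "invertible_mat L"
    using invertible_mat_if_det_nonzero[OF L_carrier] by simp
  thus "minv L \<in> carrier_mat N N" "L * minv L = 1\<^sub>m N"
    using minv_invertible_mat[OF L_carrier] by simp_all
qed

lemma minv_U_carrier: "minv U \<in> carrier_mat N N"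
  and U_minv_U: "U * minv U = 1\<^sub>m N"
  and minv_U_U: "minv U * U = 1\<^sub>m N"
  using minv_invertible_mat[OF U_carrier U_invertible] by simp_all

lemma M_carrier: "M \<in> carrier_mat N N"
  using M_eq minv_L_carrier minv_U_carrier by simp

lemma L_mult_M: "L * M = minv U"
proof -
  have "L * M = (L * minv L) * minv U"
    unfolding M_eq using L_carrier minv_L_carrier minv_U_carrier by (simp add: assoc_mult_mat)
  thus ?thesis using L_minv_L minv_U_carrier by simp
qed

lemma M_mult_U: "M * U = minv L"
proof -
  have "M * U = minv L * (minv U * U)"
    unfolding M_eq using U_carrier minv_L_carrier minv_U_carrier by (simp add: assoc_mult_mat)
  thus ?thesis using minv_U_U minv_L_carrier by simp
qed

lemma U_diag_nonzero: "i < N \<Longrightarrow> U $$ (i, i) \<noteq> 0"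
proof -
  assume i: "i < N"
  have "det U * det (minv U) = 1"
    using det_mult[OF U_carrier minv_U_carrier] U_minv_U by simp
  moreover have "det U = (\<Prod>i<N. U $$ (i, i))"
    using det_upper_triangular_prod[OF U_carrier] U_lower_zero by simp
  ultimately have "(\<Prod>i<N. U $$ (i, i)) \<noteq> 0" by (metis mult_zero_left zero_neq_one)
  thus ?thesis using i by (simp add: prod_zero_iff)
qed

lemma minv_U_lower_zero: "\<And>i j. i < N \<Longrightarrow> j < N \<Longrightarrow> j < i \<Longrightarrow> minv U $$ (i, j) = 0"
  and minv_U_diag: "\<And>i. i < N \<Longrightarrow> minv U $$ (i, i) * U $$ (i, i) = 1"
  using upper_triangular_left_inverse[OF U_carrier minv_U_carrier minv_U_U U_lower_zero U_diag_nonzero]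
  by simp_all

lemma minv_U_diag_nonzero: "i < N \<Longrightarrow> minv U $$ (i, i) \<noteq> 0"
  using minv_U_diag by fastforce

lemma minv_L_upper_zero: "\<And>i j. i < N \<Longrightarrow> j < N \<Longrightarrow> i < j \<Longrightarrow> minv L $$ (i, j) = 0"
  and minv_L_diag: "\<And>i. i < N \<Longrightarrow> minv L $$ (i, i) = 1"
proof -
  have "transpose_mat (minv L) * transpose_mat L = 1\<^sub>m N"
    using transpose_mult[OF L_carrier minv_L_carrier] L_minv_L by (simp add: transpose_one)
  note inv = upper_triangular_left_inverse[of "transpose_mat L" N "transpose_mat (minv L)", OF _ _ this]
  show "minv L $$ (i, j) = 0" if "i < N" "j < N" "i < j" for i j
    using inv(1)[of j i] that L_carrier minv_L_carrier L_upper_zero L_diag by simp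
  show "minv L $$ (i, i) = 1" if "i < N" for i
    using inv(2)[of i] that L_carrier minv_L_carrier L_upper_zero L_diag by simp
qed

lemma det_lead_submat_minv_U:
  "k \<le> N \<Longrightarrow> det (lead_submat k (minv U)) = (\<Prod>i<k. minv U $$ (i, i))"
  using det_upper_triangular_prod[of "lead_submat k (minv U)" k] minv_U_lower_zero by simp

lemma det_lead_submat:
  assumes k: "k \<le> N"
  shows "det (lead_submat k M) = (\<Prod>i<k. minv U $$ (i, i))"
proof -
  \<comment> \<open>L is lower triangular, so the leading block of L M only sees leading blocks\<close>
  have "lead_submat k (minv U) = lead_submat k L * lead_submat k M"
    unfolding L_mult_M[symmetric] by (rule lead_submat_mult[OF L_carrier M_carrier k]) (use L_upper_zero in auto)
  moreover have "det (lead_submat k L) = 1"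
    using det_lower_triangular_prod[of "lead_submat k L" k] L_upper_zero L_diag k by simp
  ultimately show ?thesis
    using det_lead_submat_minv_U[OF k] det_mult[of "lead_submat k L" k "lead_submat k M"] by simp
qed

lemma det_lead_submat_nonzero: "k \<le> N \<Longrightarrow> det (lead_submat k M) \<noteq> 0"
  using det_lead_submat minv_U_diag_nonzero by simp

lemma det_lead_submat_Suc:
  "k < N \<Longrightarrow> det (lead_submat (Suc k) M) = det (lead_submat k M) * minv U $$ (k, k)"
  using det_lead_submat by simp

lemma det_lead_submat_mult_det_lead_submat_U:
  assumes k: "k \<le> N"
  shows "det (lead_submat k M) * det (lead_submat k U) = 1"
proof -
  have "det (lead_submat k U) = (\<Prod>i<k. U $$ (i, i))"
    using det_upper_triangular_prod[of "lead_submat k U" k] U_lower_zero k by simp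
  thus ?thesis using det_lead_submat[OF k] minv_U_diag k by (simp flip: prod.distrib)
qed

lemma det_lead_submat_mult_L_block:
  assumes nb: "n + b \<le> N"
  shows "det (lead_submat n M) * det (mat b b (\<lambda>(i, j). L $$ (n + i, j)))
         = (-1) ^ (n * b) * det (mat n n (\<lambda>(i, j). M $$ (i + b, j)))"
proof -
  \<comment> \<open>L times (the first n columns of M followed by unit columns) is block upper triangular\<close>
  define s where "s = n + b"
  define Z where "Z = mat s s (\<lambda>(r, c). if c < n then M $$ (r, c) else if r = c - n then 1 else 0)"
  define G where "G = lead_submat s L * Z"
  have Z: "Z \<in> carrier_mat s s" unfolding Z_def by simp
  have G: "G \<in> carrier_mat (n + b) (n + b)"
    unfolding G_def s_def[symmetric] by (rule mult_carrier_mat[OF lead_submat_carrier Z])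
  have G_entry: "G $$ (r, c) = (\<Sum>t<s. L $$ (r, t) * Z $$ (t, c))" if "r < s" "c < s" for r c
    using that Z unfolding G_def by (simp add: scalar_prod_def lessThan_atLeast0)
  have G_left: "G $$ (r, c) = minv U $$ (r, c)" if r: "r < s" and c: "c < n" for r c
  proof -
    have "G $$ (r, c) = (\<Sum>t<s. L $$ (r, t) * M $$ (t, c))"
      using G_entry[of r c] r c unfolding s_def Z_def by simp
    also have "\<dots> = (\<Sum>t<N. L $$ (r, t) * M $$ (t, c))"
      by (rule sum.mono_neutral_left) (use r nb L_upper_zero in \<open>auto simp: s_def\<close>)
    also have "\<dots> = (L * M) $$ (r, c)"
      using L_carrier M_carrier r c nb by (simp add: s_def scalar_prod_def lessThan_atLeast0)
    finally show ?thesis by (simp add: L_mult_M)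
  qed
  have G_right: "G $$ (r, c) = L $$ (r, c - n)" if r: "r < s" and c: "n \<le> c" "c < s" for r c
  proof -
    have "G $$ (r, c) = (\<Sum>t<s. L $$ (r, t) * (if t = c - n then 1 else 0))"
      using G_entry[of r c] r c unfolding Z_def by simp
    also have "\<dots> = (\<Sum>t<s. if t = c - n then L $$ (r, t) else 0)"
      by (rule sum.cong) auto
    finally show ?thesis using c by (simp add: s_def)
  qed
  have "det G = det (mat n n (\<lambda>(r, c). G $$ (r, c))) * det (mat b b (\<lambda>(r, c). G $$ (r + n, c + n)))"
    by (rule det_block_upper_triangular[OF G]) (use G_left minv_U_lower_zero nb in \<open>simp add: s_def\<close>)
  also have "mat n n (\<lambda>(r, c). G $$ (r, c)) = lead_submat n (minv U)"
    unfolding lead_submat_def by (rule eq_matI) (auto simp: G_left s_def)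
  also have "det (lead_submat n (minv U)) = det (lead_submat n M)"
    using det_lead_submat det_lead_submat_minv_U nb by simp
  also have "mat b b (\<lambda>(r, c). G $$ (r + n, c + n)) = mat b b (\<lambda>(i, j). L $$ (n + i, j))"
    by (rule eq_matI) (auto simp: G_right s_def add.commute)
  finally have "det G = det (lead_submat n M) * det (mat b b (\<lambda>(i, j). L $$ (n + i, j)))" .
  moreover have "det G = det (lead_submat s L) * det Z"
    unfolding G_def by (rule det_mult[OF _ Z]) simp
  moreover have "det (lead_submat s L) = 1"
    using det_lower_triangular_prod[of "lead_submat s L" s] L_upper_zero L_diag nb by (simp add: s_def)
  moreover have "det Z = (-1) ^ (n * b) * det (mat n n (\<lambda>(i, j). M $$ (i + b, j)))"
    unfolding Z_def s_def using det_append_unit_cols[of n b "\<lambda>r c. M $$ (r, c)"] by simp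
  ultimately show ?thesis by simp
qed

lemma det_lead_submat_mult_U_block:
  assumes na: "n + a \<le> N"
  shows "det (lead_submat (n + a) M) * det (mat a a (\<lambda>(i, j). U $$ (i, n + j)))
         = (-1) ^ (n * a) * det (mat n n (\<lambda>(i, j). M $$ (i, j + a)))"
proof -
  \<comment> \<open>(the first n rows of M followed by unit rows) times U is block lower triangular\<close>
  define s where "s = n + a"
  define Z where "Z = mat s s (\<lambda>(r, c). if r < n then M $$ (r, c) else if c = r - n then 1 else 0)"
  define G where "G = Z * lead_submat s U"
  have Z: "Z \<in> carrier_mat s s" unfolding Z_def by simp
  have G: "G \<in> carrier_mat (n + a) (n + a)"
    unfolding G_def s_def[symmetric] by (rule mult_carrier_mat[OF Z lead_submat_carrier])
  have G_entry: "G $$ (r, c) = (\<Sum>t<s. Z $$ (r, t) * U $$ (t, c))" if "r < s" "c < s" for r c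
    using that Z unfolding G_def by (simp add: scalar_prod_def lessThan_atLeast0)
  have G_top: "G $$ (r, c) = minv L $$ (r, c)" if r: "r < n" and c: "c < s" for r c
  proof -
    have "G $$ (r, c) = (\<Sum>t<s. M $$ (r, t) * U $$ (t, c))"
      using G_entry[of r c] r c unfolding s_def Z_def by simp
    also have "\<dots> = (\<Sum>t<N. M $$ (r, t) * U $$ (t, c))"
      by (rule sum.mono_neutral_left) (use c na U_lower_zero in \<open>auto simp: s_def\<close>)
    also have "\<dots> = (M * U) $$ (r, c)"
      using M_carrier U_carrier r c na by (simp add: s_def scalar_prod_def lessThan_atLeast0)
    finally show ?thesis by (simp add: M_mult_U)
  qed
  have G_bottom: "G $$ (r, c) = U $$ (r - n, c)" if r: "n \<le> r" "r < s" and c: "c < s" for r c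
  proof -
    have "G $$ (r, c) = (\<Sum>t<s. (if t = r - n then 1 else 0) * U $$ (t, c))"
      using G_entry[of r c] r c unfolding Z_def by simp
    also have "\<dots> = (\<Sum>t<s. if t = r - n then U $$ (t, c) else 0)"
      by (rule sum.cong) auto
    finally show ?thesis using r by (simp add: s_def)
  qed
  have "det G = det (mat n n (\<lambda>(r, c). G $$ (r, c))) * det (mat a a (\<lambda>(r, c). G $$ (r + n, c + n)))"
    by (rule det_block_lower_triangular[OF G]) (use G_top minv_L_upper_zero na in \<open>simp add: s_def\<close>)
  also have "mat n n (\<lambda>(r, c). G $$ (r, c)) = lead_submat n (minv L)"
    unfolding lead_submat_def by (rule eq_matI) (auto simp: G_top s_def)
  also have "det (lead_submat n (minv L)) = 1"
    using det_lower_triangular_prod[of "lead_submat n (minv L)" n] minv_L_upper_zero minv_L_diag na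
    by simp
  also have "mat a a (\<lambda>(r, c). G $$ (r + n, c + n)) = mat a a (\<lambda>(i, j). U $$ (i, n + j))"
    by (rule eq_matI) (auto simp: G_bottom s_def add.commute)
  finally have "det G = det (mat a a (\<lambda>(i, j). U $$ (i, n + j)))" by simp
  moreover have "det G = det Z * det (lead_submat s U)"
    unfolding G_def by (rule det_mult[OF Z]) simp
  moreover have "det (lead_submat s M) * det (lead_submat s U) = 1"
    using det_lead_submat_mult_det_lead_submat_U na by (simp add: s_def)
  moreover have "det Z = (-1) ^ (n * a) * det (mat n n (\<lambda>(i, j). M $$ (i, j + a)))"
    unfolding Z_def s_def using det_append_unit_rows[of n a "\<lambda>r c. M $$ (r, c)"] by simp
  ultimately show ?thesis unfolding s_def by (metis mult.assoc mult.commute mult_1)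
qed

end

section \<open>The \<open>\<tau>\<close>-determinants as quotients of minors\<close>

definition exchange_mat :: "nat \<Rightarrow> real mat" where
  "exchange_mat a = mat a a (\<lambda>(j, k). if j + k + 1 = a then 1 else 0)"

lemma exchange_mat_involution: "exchange_mat a * exchange_mat a = 1\<^sub>m a"
proof (rule eq_matI)
  fix i k assume "i < dim_row (1\<^sub>m a)" "k < dim_col (1\<^sub>m a)"
  hence i: "i < a" and k: "k < a" by auto
  have "(exchange_mat a * exchange_mat a) $$ (i, k)
      = (\<Sum>j<a. (if i + j + 1 = a then 1 else 0) * (if j + k + 1 = a then 1 else 0))"
    using i k by (simp add: exchange_mat_def scalar_prod_def lessThan_atLeast0)
  also have "\<dots> = (\<Sum>j<a. if j = a - (i + 1) then (if j + k + 1 = a then 1 else 0) else 0)"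
    by (rule sum.cong) (use i in auto)
  finally show "(exchange_mat a * exchange_mat a) $$ (i, k) = 1\<^sub>m a $$ (i, k)"
    using i k by auto
qed (auto simp: exchange_mat_def)

lemma det_exchange_mat_nonzero: "det (exchange_mat a) \<noteq> 0"
proof -
  have "exchange_mat a \<in> carrier_mat a a" unfolding exchange_mat_def by simp
  hence "det (exchange_mat a) * det (exchange_mat a) = 1"
    using det_mult exchange_mat_involution by (metis det_one)
  thus ?thesis by auto
qed

lemma Xmat_at_zero:
  assumes "t < n" and "j < r"
  shows "Xmat r n 0 $$ (t, j) = (if t = j then 1 else 0)"
proof (cases "t < r")
  case False
  hence "t div r \<noteq> 0" using assms by (simp add: div_greater_zero_iff)
  thus ?thesis using assms False by (auto simp: Xmat_def)
qed (use assms in \<open>auto simp: Xmat_def\<close>)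

lemma Bpoly_at_zero:
  assumes L: "L \<in> carrier_mat N N" and "r < N" "j < q" "j < N"
  shows "Bpoly q N L 0 $$ (r, j) = L $$ (r, j)"
proof -
  have "Bpoly q N L 0 $$ (r, j) = (\<Sum>t<N. L $$ (r, t) * Xmat q N 0 $$ (t, j))"
    using assms by (simp add: Bpoly_def Xmat_def scalar_prod_def lessThan_atLeast0)
  also have "\<dots> = (\<Sum>t<N. if t = j then L $$ (r, t) else 0)"
    by (rule sum.cong) (use assms in \<open>auto simp: Xmat_at_zero\<close>)
  finally show ?thesis using assms by simp
qed

lemma Apoly_at_zero:
  assumes U: "U \<in> carrier_mat N N" and "i < p" "i < N" "c < N"
  shows "Apoly p N U 0 $$ (i, c) = U $$ (i, c)"
proof -
  have "Apoly p N U 0 $$ (i, c) = (\<Sum>t<N. Xmat p N 0 $$ (t, i) * U $$ (t, c))"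
    using assms by (simp add: Apoly_def Xmat_def scalar_prod_def lessThan_atLeast0)
  also have "\<dots> = (\<Sum>t<N. if t = i then U $$ (t, c) else 0)"
    by (rule sum.cong) (use assms in \<open>auto simp: Xmat_at_zero\<close>)
  finally show ?thesis using assms by simp
qed

lemma tauB_eq_det:
  assumes "L \<in> carrier_mat N N" and "b \<le> q" and "n + b \<le> N"
  shows "tauB q N L b n = det (mat b b (\<lambda>(i, j). L $$ (n + i, j)))"
proof -
  have "mat b b (\<lambda>(i, j). Bpoly q N L 0 $$ (n + i, j)) = mat b b (\<lambda>(i, j). L $$ (n + i, j))"
    by (rule eq_matI) (use assms in \<open>auto simp: Bpoly_at_zero\<close>)
  thus ?thesis unfolding tauB_def by simp
qed

lemma tauA_eq_det:
  assumes U: "U \<in> carrier_mat N N" and "a \<le> p" and "n + a \<le> N"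
  shows "tauA p N U a n = det (mat a a (\<lambda>(i, j). U $$ (i, n + j))) * det (exchange_mat a)"
proof -
  have block: "mat a a (\<lambda>(i, j). U $$ (i, n + j)) \<in> carrier_mat a a" by simp
  \<comment> \<open>tauA lists the columns n, ..., n + a - 1 in reverse order\<close>
  have "mat a a (\<lambda>(i, k). Apoly p N U 0 $$ (i, n + a - (k + 1)))
      = mat a a (\<lambda>(i, j). U $$ (i, n + j)) * exchange_mat a"
  proof (rule eq_matI)
    fix i k assume "i < dim_row (mat a a (\<lambda>(i, j). U $$ (i, n + j)) * exchange_mat a)"
      and "k < dim_col (mat a a (\<lambda>(i, j). U $$ (i, n + j)) * exchange_mat a)"
    hence i: "i < a" and k: "k < a" by (auto simp: exchange_mat_def)
    have "(mat a a (\<lambda>(i, j). U $$ (i, n + j)) * exchange_mat a) $$ (i, k)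
        = (\<Sum>j<a. U $$ (i, n + j) * (if j + k + 1 = a then 1 else 0))"
      using i k by (simp add: exchange_mat_def scalar_prod_def lessThan_atLeast0)
    also have "\<dots> = (\<Sum>j<a. if j = a - (k + 1) then U $$ (i, n + j) else 0)"
      by (rule sum.cong) (use k in auto)
    also have "\<dots> = Apoly p N U 0 $$ (i, n + a - (k + 1))"
      using k i assms by (simp add: add_diff_assoc Apoly_at_zero)
    finally show "mat a a (\<lambda>(i, k). Apoly p N U 0 $$ (i, n + a - (k + 1))) $$ (i, k)
        = (mat a a (\<lambda>(i, j). U $$ (i, n + j)) * exchange_mat a) $$ (i, k)"
      using i k by simp
  qed (auto simp: exchange_mat_def)
  moreover have "exchange_mat a \<in> carrier_mat a a" unfolding exchange_mat_def by simp
  ultimately show ?thesis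
    unfolding tauA_def using det_mult[OF block] by (simp add: exchange_mat_def)
qed

definition shift_mat :: "nat \<Rightarrow> (nat \<Rightarrow> nat \<Rightarrow> real) \<Rightarrow> nat \<Rightarrow> nat \<Rightarrow> real mat" where
  "shift_mat N g n m = mat N N (\<lambda>(k, l). g (k + n) (l + m))"

lemma tauB_shift_mat:
  assumes gb: "gauss_borel N (shift_mat N g 0 0) L U" and b: "b \<le> q" and nb: "n + b \<le> N"
  shows "tauB q N L b n = (-1) ^ (n * b) * det (lead_submat n (shift_mat N g b 0))
                          / det (lead_submat n (shift_mat N g 0 0))"
proof -
  interpret gauss_borel_factorization N "shift_mat N g 0 0" L U by unfold_locales (fact gb)
  have "mat n n (\<lambda>(i, j). shift_mat N g 0 0 $$ (i + b, j)) = lead_submat n (shift_mat N g b 0)"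
    by (rule eq_matI) (use nb in \<open>auto simp: shift_mat_def\<close>)
  thus ?thesis
    using det_lead_submat_mult_L_block[OF nb] det_lead_submat_nonzero[of n] nb
    by (simp add: tauB_eq_det[OF L_carrier b nb] field_simps)
qed

lemma tauA_shift_mat:
  assumes gb: "gauss_borel N (shift_mat N g 0 0) L U" and a: "a \<le> p" and na: "n + a \<le> N"
  shows "tauA p N U a n = det (exchange_mat a) * (-1) ^ (n * a)
                          * det (lead_submat n (shift_mat N g 0 a))
                          / det (lead_submat (n + a) (shift_mat N g 0 0))"
proof -
  interpret gauss_borel_factorization N "shift_mat N g 0 0" L U by unfold_locales (fact gb)
  have "mat n n (\<lambda>(i, j). shift_mat N g 0 0 $$ (i, j + a)) = lead_submat n (shift_mat N g 0 a)"
    by (rule eq_matI) (use na in \<open>auto simp: shift_mat_def\<close>)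
  thus ?thesis
    using det_lead_submat_mult_U_block[OF na] det_lead_submat_nonzero[OF na]
    by (simp add: tauA_eq_det[OF U_carrier a na] field_simps)
qed

section \<open>The factors \<open>U\<^sub>b\<close> and \<open>L\<^sub>a\<close>\<close>

lemma diag_minv_U_mult_U:
  assumes gb: "gauss_borel N M L U" and gb': "gauss_borel N M' L' U'" and n: "n < N"
  shows "(minv U' * U) $$ (n, n) = minv U' $$ (n, n) / minv U $$ (n, n)"
proof -
  interpret G: gauss_borel_factorization N M L U by unfold_locales (fact gb)
  interpret G': gauss_borel_factorization N M' L' U' by unfold_locales (fact gb')
  have "(minv U' * U) $$ (n, n) = minv U' $$ (n, n) * U $$ (n, n)"
    by (rule upper_triangular_mult_diag[OF G'.minv_U_carrier G.U_carrier n
          G'.minv_U_lower_zero G.U_lower_zero])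
  thus ?thesis using G.minv_U_diag[OF n] G.minv_U_diag_nonzero[OF n] by (simp add: field_simps)
qed

lemma shift_rows_diag_eq_tauB_ratio:
  assumes gb0: "gauss_borel N (shift_mat N g 0 0) L0 U0"
    and gbc: "gauss_borel N (shift_mat N g c 0) Lc Uc"
    and gbb: "gauss_borel N (shift_mat N g (Suc c) 0) Lb Ub"
    and q: "Suc c \<le> q" and n: "n + c + 2 \<le> N"
  shows "(minv Ub * Uc) $$ (n, n)
         = - (tauB q N L0 c n * tauB q N L0 (Suc c) (n + 1))
           / (tauB q N L0 c (n + 1) * tauB q N L0 (Suc c) n)"
proof -
  interpret G0: gauss_borel_factorization N "shift_mat N g 0 0" L0 U0 by unfold_locales (fact gb0)
  interpret Gc: gauss_borel_factorization N "shift_mat N g c 0" Lc Uc by unfold_locales (fact gbc)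
  interpret Gb: gauss_borel_factorization N "shift_mat N g (Suc c) 0" Lb Ub
    by unfold_locales (fact gbb)
  define \<Delta> where "\<Delta> b k = det (lead_submat k (shift_mat N g b 0))" for b k
  have nonzero: "\<Delta> 0 n \<noteq> 0" "\<Delta> 0 (n + 1) \<noteq> 0" "\<Delta> c n \<noteq> 0" "\<Delta> c (n + 1) \<noteq> 0"
    "\<Delta> (Suc c) n \<noteq> 0" "\<Delta> (Suc c) (n + 1) \<noteq> 0"
    unfolding \<Delta>_def using n G0.det_lead_submat_nonzero Gc.det_lead_submat_nonzero
      Gb.det_lead_submat_nonzero by simp_all
  have "(minv Ub * Uc) $$ (n, n) = minv Ub $$ (n, n) / minv Uc $$ (n, n)"
    using diag_minv_U_mult_U[OF gbc gbb] n by simp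
  also have "\<dots> = (\<Delta> (Suc c) (n + 1) / \<Delta> (Suc c) n) / (\<Delta> c (n + 1) / \<Delta> c n)"
    using Gb.det_lead_submat_Suc[of n] Gc.det_lead_submat_Suc[of n] nonzero n
    unfolding \<Delta>_def by simp
  finally have lhs: "(minv Ub * Uc) $$ (n, n)
      = (\<Delta> (Suc c) (n + 1) / \<Delta> (Suc c) n) / (\<Delta> c (n + 1) / \<Delta> c n)" .
  have tau: "tauB q N L0 b k = (-1) ^ (k * b) * \<Delta> b k / \<Delta> 0 k" if "b \<le> Suc c" "k \<le> n + 1" for b k
    unfolding \<Delta>_def by (rule tauB_shift_mat[OF gb0]) (use that q n in auto)
  have sign: "(-1::real) ^ (n * c) * (-1) ^ ((n + 1) * Suc c)
      = - ((-1) ^ ((n + 1) * c) * (-1) ^ (n * Suc c))"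
    by (simp add: power_add algebra_simps)
  show ?thesis
    using nonzero sign by (simp add: lhs tau field_simps)
qed

lemma shift_cols_subdiag_mult_minv_U:
  assumes gbc: "gauss_borel N (shift_mat N g 0 c) Lc Uc"
    and gba: "gauss_borel N (shift_mat N g 0 (Suc c)) La Ua" and n: "Suc n < N"
  shows "(Lc * minv La) $$ (Suc n, n) * minv Ua $$ (n, n) = minv Uc $$ (Suc n, Suc n)"
proof -
  interpret Gc: gauss_borel_factorization N "shift_mat N g 0 c" Lc Uc by unfold_locales (fact gbc)
  interpret Ga: gauss_borel_factorization N "shift_mat N g 0 (Suc c)" La Ua
    by unfold_locales (fact gba)
  define P where "P = Lc * minv La"
  have P: "P \<in> carrier_mat N N" unfolding P_def using Gc.L_carrier Ga.minv_L_carrier by simp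
  have "P * minv Ua = Lc * shift_mat N g 0 (Suc c)"
    unfolding P_def Ga.M_eq using Gc.L_carrier Ga.minv_L_carrier Ga.minv_U_carrier
    by (simp add: assoc_mult_mat)
  \<comment> \<open>row Suc n of P times the upper triangular minv Ua is a column shift of row Suc n of minv Uc\<close>
  have row: "(\<Sum>t<N. P $$ (Suc n, t) * minv Ua $$ (t, j))
      = (if j = n then minv Uc $$ (Suc n, Suc n) else 0)" if j: "j \<le> n" for j
  proof -
    have "(\<Sum>t<N. P $$ (Suc n, t) * minv Ua $$ (t, j)) = (P * minv Ua) $$ (Suc n, j)"
      using P Ga.minv_U_carrier n j by (simp add: scalar_prod_def lessThan_atLeast0)
    also have "\<dots> = (\<Sum>t<N. Lc $$ (Suc n, t) * shift_mat N g 0 (Suc c) $$ (t, j))"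
      unfolding \<open>P * minv Ua = _\<close> using Gc.L_carrier n j
      by (simp add: shift_mat_def scalar_prod_def lessThan_atLeast0)
    also have "\<dots> = (\<Sum>t<N. Lc $$ (Suc n, t) * shift_mat N g 0 c $$ (t, Suc j))"
      by (rule sum.cong) (use n j in \<open>auto simp: shift_mat_def\<close>)
    also have "\<dots> = (Lc * shift_mat N g 0 c) $$ (Suc n, Suc j)"
      using Gc.L_carrier n j by (simp add: shift_mat_def scalar_prod_def lessThan_atLeast0)
    also have "\<dots> = minv Uc $$ (Suc n, Suc j)" by (simp add: Gc.L_mult_M)
    finally show ?thesis using Gc.minv_U_lower_zero[of "Suc n" "Suc j"] n j by auto
  qed
  show ?thesis
    using upper_triangular_row_solve(2)[OF Ga.minv_U_lower_zero Ga.minv_U_diag_nonzero _ row] n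
    unfolding P_def by simp
qed

lemma shift_cols_subdiag_eq_tauA_ratio:
  assumes gb0: "gauss_borel N (shift_mat N g 0 0) L0 U0"
    and gbc: "gauss_borel N (shift_mat N g 0 c) Lc Uc"
    and gba: "gauss_borel N (shift_mat N g 0 (Suc c)) La Ua"
    and p: "Suc c \<le> p" and n: "n + c + 2 \<le> N"
  shows "(Lc * minv La) $$ (n + 1, n)
         = - (tauA p N U0 c (n + 2) * tauA p N U0 (Suc c) n)
           / (tauA p N U0 c (n + 1) * tauA p N U0 (Suc c) (n + 1))"
proof -
  interpret G0: gauss_borel_factorization N "shift_mat N g 0 0" L0 U0 by unfold_locales (fact gb0)
  interpret Gc: gauss_borel_factorization N "shift_mat N g 0 c" Lc Uc by unfold_locales (fact gbc)
  interpret Ga: gauss_borel_factorization N "shift_mat N g 0 (Suc c)" La Ua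
    by unfold_locales (fact gba)
  define \<Delta> where "\<Delta> a k = det (lead_submat k (shift_mat N g 0 a))" for a k
  have nonzero: "\<Delta> 0 (n + c + 1) \<noteq> 0" "\<Delta> 0 (n + c + 2) \<noteq> 0"
    "\<Delta> c (n + 1) \<noteq> 0" "\<Delta> c (n + 2) \<noteq> 0" "\<Delta> (Suc c) n \<noteq> 0" "\<Delta> (Suc c) (n + 1) \<noteq> 0"
    unfolding \<Delta>_def using n G0.det_lead_submat_nonzero Gc.det_lead_submat_nonzero
      Ga.det_lead_submat_nonzero by simp_all
  have "(Lc * minv La) $$ (n + 1, n) = minv Uc $$ (n + 1, n + 1) / minv Ua $$ (n, n)"
    using shift_cols_subdiag_mult_minv_U[OF gbc gba] Ga.minv_U_diag_nonzero[of n] n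
    by (simp add: field_simps)
  also have "\<dots> = (\<Delta> c (n + 2) / \<Delta> c (n + 1)) / (\<Delta> (Suc c) (n + 1) / \<Delta> (Suc c) n)"
    using Gc.det_lead_submat_Suc[of "n + 1"] Ga.det_lead_submat_Suc[of n] nonzero n
    unfolding \<Delta>_def by (simp add: numeral_2_eq_2)
  finally have lhs: "(Lc * minv La) $$ (n + 1, n)
      = (\<Delta> c (n + 2) / \<Delta> c (n + 1)) / (\<Delta> (Suc c) (n + 1) / \<Delta> (Suc c) n)" .
  have tau: "tauA p N U0 a k = det (exchange_mat a) * (-1) ^ (k * a) * \<Delta> a k / \<Delta> 0 (k + a)"
    if "a \<le> Suc c" "k + a \<le> n + c + 2" for a k
    unfolding \<Delta>_def by (rule tauA_shift_mat[OF gb0]) (use that p n in auto)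
  have sign: "(-1::real) ^ ((n + 2) * c) * (-1) ^ (n * Suc c)
      = - ((-1) ^ ((n + 1) * c) * (-1) ^ ((n + 1) * Suc c))"
    by (simp add: power_add algebra_simps)
  show ?thesis
    unfolding lhs using nonzero sign det_exchange_mat_nonzero[of c] det_exchange_mat_nonzero[of "Suc c"]
    by (simp add: tau field_simps add.commute)
qed

section \<open>Moment matrices\<close>

lemma frakX_power_entry:
  assumes i: "i < r" and j: "j < r"
  shows "(frakX r x ^\<^sub>m n) $$ (i, j) = (if j = (i + n) mod r then x ^ ((i + n) div r) else 0)"
  using j
proof (induction n arbitrary: j)
  case 0
  thus ?case using i by (simp add: frakX_def)
next
  case (Suc n)
  define s where "s = (i + n) mod r"
  define d where "d = (i + n) div r"
  have s: "s < r" using i unfolding s_def by simp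
  have X: "frakX r x \<in> carrier_mat r r" unfolding frakX_def by simp
  have "(frakX r x ^\<^sub>m Suc n) $$ (i, j) = (\<Sum>t<r. (frakX r x ^\<^sub>m n) $$ (i, t) * frakX r x $$ (t, j))"
    using i Suc.prems X by (simp add: scalar_prod_def lessThan_atLeast0 pow_mat_dim_square[OF X])
  also have "\<dots> = (\<Sum>t<r. if t = s then x ^ d * frakX r x $$ (t, j) else 0)"
    by (rule sum.cong) (auto simp: Suc.IH s_def d_def)
  also have "\<dots> = x ^ d * frakX r x $$ (s, j)" using s by simp
  also have "\<dots> = (if j = (i + Suc n) mod r then x ^ ((i + Suc n) div r) else 0)"
  proof (cases "Suc s = r")
    case True
    hence "(i + Suc n) mod r = 0" "(i + Suc n) div r = Suc d"
      unfolding s_def d_def by (simp_all add: mod_Suc div_Suc)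
    thus ?thesis using True s Suc.prems by (auto simp: frakX_def)
  next
    case False
    hence "(i + Suc n) mod r = Suc s" "(i + Suc n) div r = d"
      unfolding s_def d_def by (simp_all add: mod_Suc div_Suc)
    thus ?thesis using False s Suc.prems by (auto simp: frakX_def)
  qed
  finally show ?case .
qed

definition moment :: "nat \<Rightarrow> nat \<Rightarrow> (nat \<Rightarrow> nat \<Rightarrow> smeasure) \<Rightarrow> nat \<Rightarrow> nat \<Rightarrow> real" where
  "moment q p \<mu> k l = sint (\<mu> (k mod q) (l mod p)) (\<lambda>x. x ^ (k div q) * x ^ (l div p))"

lemma moment_mat_eq_shift_mat:
  assumes q: "1 \<le> q" and p: "1 \<le> p"
  shows "moment_mat q p \<mu> n m N N = shift_mat N (moment q p \<mu>) n m"
proof (rule eq_matI)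
  fix k l assume "k < dim_row (shift_mat N (moment q p \<mu>) n m)"
    and "l < dim_col (shift_mat N (moment q p \<mu>) n m)"
  hence k: "k < N" and l: "l < N" by (auto simp: shift_mat_def)
  define h where "h = (\<lambda>x::real. x ^ ((k + n) div q) * x ^ ((l + m) div p))"
  have div_mod: "(a::nat) div r + (a mod r + b) div r = (a + b) div r" for a b r
    by (simp add: div_add1_eq[of a b r] div_add1_eq[of "a mod r" b r])
  have integrand: "(\<lambda>x. Xmat q N x $$ (k, i) * (frakX q x ^\<^sub>m n) $$ (i, i')
                      * (frakX p x ^\<^sub>m m) $$ (j, j') * Xmat p N x $$ (l, j))
        = (if i = k mod q then if j = l mod p then if i' = (k + n) mod q then
             if j' = (l + m) mod p then h else (\<lambda>x. 0) else (\<lambda>x. 0) else (\<lambda>x. 0) else (\<lambda>x. 0))"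
    if "i < q" "j < p" "i' < q" "j' < p" for i j i' j'
    using that k l q p div_mod[of k q n] div_mod[of l p m, unfolded add.commute[of "l div p"]]
    by (auto simp: Xmat_def frakX_power_entry h_def mod_add_left_eq power_add[symmetric] add.assoc)
  have sint_zero: "sint \<nu> (\<lambda>x. 0) = 0" for \<nu> by (simp add: sint_def)
  have sum_if: "(\<Sum>x\<in>A. if P then f x else 0) = (if P then (\<Sum>x\<in>A. f x) else (0::real))"
    for A P and f :: "nat \<Rightarrow> real" by simp
  have "moment_mat q p \<mu> n m N N $$ (k, l) = (\<Sum>i<q. \<Sum>j<p. \<Sum>i'<q. \<Sum>j'<p.
      sint (\<mu> i' j') (if i = k mod q then if j = l mod p then if i' = (k + n) mod q then
             if j' = (l + m) mod p then h else (\<lambda>x. 0) else (\<lambda>x. 0) else (\<lambda>x. 0) else (\<lambda>x. 0)))"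
    using k l by (simp add: moment_mat_def integrand)
  also have "\<dots> = sint (\<mu> ((k + n) mod q) ((l + m) mod p)) h"
    using q p by (simp add: if_distrib[of "sint _"] sint_zero sum_if cong: if_cong)
  finally show "moment_mat q p \<mu> n m N N $$ (k, l) = shift_mat N (moment q p \<mu>) n m $$ (k, l)"
    using k l by (simp add: shift_mat_def moment_def h_def)
qed (auto simp: moment_mat_def shift_mat_def)

theorem mainTheorem2:
  fixes p q N :: nat
    and \<mu> :: "nat \<Rightarrow> nat \<Rightarrow> smeasure"
    and LF UF :: "nat \<times> nat \<Rightarrow> real mat"
  assumes "p \<ge> 1" and "q \<ge> 1" and "N \<ge> 1"
    and meas: "\<forall>i<q. \<forall>j<p. real_measure_fm (\<mu> i j)"
    and GB: "\<forall>nm \<in> {(0, 0)} \<union> {(b, 0) | b. 1 \<le> b \<and> b \<le> q} \<union> {(0, a) | a. 1 \<le> a \<and> a \<le> p}.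
               gauss_borel N (moment_mat q p \<mu> (fst nm) (snd nm) N N) (LF nm) (UF nm)"
  shows "(\<forall>b n. 1 \<le> b \<and> b \<le> q \<and> n + b + 1 \<le> N \<longrightarrow>
            (minv (UF (b, 0)) * UF (b - 1, 0)) $$ (n, n) =
              - (tauB q N (LF (0, 0)) (b - 1) n * tauB q N (LF (0, 0)) b (n + 1)) /
                (tauB q N (LF (0, 0)) (b - 1) (n + 1) * tauB q N (LF (0, 0)) b n))
       \<and> (\<forall>a n. 1 \<le> a \<and> a \<le> p \<and> n + a + 1 \<le> N \<longrightarrow>
            (LF (0, a - 1) * minv (LF (0, a))) $$ (n + 1, n) =
              - (tauA p N (UF (0, 0)) (a - 1) (n + 2) * tauA p N (UF (0, 0)) a n) /
                (tauA p N (UF (0, 0)) (a - 1) (n + 1) * tauA p N (UF (0, 0)) a (n + 1)))"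
proof -
  let ?g = "moment q p \<mu>"
  have shift: "moment_mat q p \<mu> n m N N = shift_mat N ?g n m" for n m
    using moment_mat_eq_shift_mat assms(1,2) by simp
  have gb_rows: "gauss_borel N (shift_mat N ?g b 0) (LF (b, 0)) (UF (b, 0))" if "b \<le> q" for b
  proof -
    have "(b, 0) \<in> {(0, 0)} \<union> {(b, 0) | b. 1 \<le> b \<and> b \<le> q} \<union> {(0, a) | a. 1 \<le> a \<and> a \<le> p}"
      using that by (cases "b = 0") auto
    from bspec[OF GB this] show ?thesis by (simp add: shift)
  qed
  have gb_cols: "gauss_borel N (shift_mat N ?g 0 a) (LF (0, a)) (UF (0, a))" if "a \<le> p" for a
  proof -
    have "(0, a) \<in> {(0, 0)} \<union> {(b, 0) | b. 1 \<le> b \<and> b \<le> q} \<union> {(0, a) | a. 1 \<le> a \<and> a \<le> p}"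
      using that by (cases "a = 0") auto
    from bspec[OF GB this] show ?thesis by (simp add: shift)
  qed
  show ?thesis
    apply (intro conjI allI impI; elim conjE)
    subgoal for b n
      using shift_rows_diag_eq_tauB_ratio[OF gb_rows gb_rows gb_rows, where c = "b - 1" and n = n]
      by (cases b) auto
    subgoal for a n
      using shift_cols_subdiag_eq_tauA_ratio[OF gb_cols gb_cols gb_cols, where c = "a - 1" and n = n]
      by (cases a) auto
    done
qed

end
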